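(* For every graph $G$, $f^-(G+K_1)=f^-(G)$ and $f^+(G+K_1)=f^+(G)$.
   Context: All graphs are finite, simple, undirected and connected. $N[v]=N(v)\cup\{v\}$ is the closed neighbourhood. A chromatic colouring of $G$ is a proper vertex colouring $c:V(G)\to\{c_1,\dots,c_{\chi(G)}\}$. With respect to $c$, a vertex $v$ yields a rainbow neighbourhood if $N[v]$ contains a vertex of each colour $c_1,\dots,c_{\chi(G)}$; $r_\chi(G)$ is the number of such vertices, and $r^-_\chi(G)$, $r^+_\chi(G)$ are its minimum and maximum over all chromatic colourings of $G$. Fading: for a set $F\subseteq V(G)$ (a fade set), the vertices of $F$ receive a transparent colour $c^\circ$ not among $c_1,\dots,c_{\chi(G)}$; after fading, $v$ yields a rainbow neighbourhood iff for every $i$ some vertex of $N[v]\setminus F$ has colour $c_i$. The fading number $f^-(G)$ is the maximum $|F|$ over chromatic colourings $c$ attaining $r_\chi=r^-_\chi(G)$ and fade sets $F$ such that, after fading $F$, the number of vertices yielding rainbow neighbourhoods is still $r^-_\chi(G)$; $f^+(G)$ is defined analogously with $r^+_\chi(G)$. The join $G_1+G_2$ of vertex-disjoint graphs is $G_1\cup G_2$ together with all edges joining a vertex of $G_1$ to a vertex of $G_2$. *)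

theory Defs
  imports Main
begin

definition simple_graph :: "'a set \<Rightarrow> 'a set set \<Rightarrow> bool" where
  "simple_graph V E \<longleftrightarrow> finite V \<and> (\<forall>e\<in>E. \<exists>u v. e = {u, v} \<and> u \<noteq> v \<and> u \<in> V \<and> v \<in> V)"

definition adj_rel :: "'a set set \<Rightarrow> ('a \<times> 'a) set" where
  "adj_rel E = {(u, v). {u, v} \<in> E}"

definition connected_graph :: "'a set \<Rightarrow> 'a set set \<Rightarrow> bool" where
  "connected_graph V E \<longleftrightarrow> simple_graph V E \<and> V \<noteq> {} \<and>
     (\<forall>u\<in>V. \<forall>v\<in>V. (u, v) \<in> (adj_rel E)\<^sup>*)"

definition closed_nbhd :: "'a set \<Rightarrow> 'a set set \<Rightarrow> 'a \<Rightarrow> 'a set" where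
  "closed_nbhd V E v = insert v {u \<in> V. {u, v} \<in> E}"

definition proper_colouring :: "'a set \<Rightarrow> 'a set set \<Rightarrow> ('a \<Rightarrow> nat) \<Rightarrow> nat \<Rightarrow> bool" where
  "proper_colouring V E c k \<longleftrightarrow> (\<forall>v\<in>V. c v \<in> {1..k}) \<and>
     (\<forall>u\<in>V. \<forall>v\<in>V. {u, v} \<in> E \<longrightarrow> c u \<noteq> c v)"

definition chromatic_number :: "'a set \<Rightarrow> 'a set set \<Rightarrow> nat" where
  "chromatic_number V E = (LEAST k. \<exists>c. proper_colouring V E c k)"

definition chromatic_colouring :: "'a set \<Rightarrow> 'a set set \<Rightarrow> ('a \<Rightarrow> nat) \<Rightarrow> bool" where
  "chromatic_colouring V E c \<longleftrightarrow> proper_colouring V E c (chromatic_number V E)"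

text \<open>Number of vertices yielding a rainbow neighbourhood after fading the set F.\<close>
definition rainbow_count :: "'a set \<Rightarrow> 'a set set \<Rightarrow> ('a \<Rightarrow> nat) \<Rightarrow> 'a set \<Rightarrow> nat" where
  "rainbow_count V E c F = card {v \<in> V. \<forall>i \<in> {1..chromatic_number V E}.
       \<exists>u \<in> closed_nbhd V E v - F. c u = i}"

definition r_minus :: "'a set \<Rightarrow> 'a set set \<Rightarrow> nat" where
  "r_minus V E = Min {rainbow_count V E c {} | c. chromatic_colouring V E c}"

definition r_plus :: "'a set \<Rightarrow> 'a set set \<Rightarrow> nat" where
  "r_plus V E = Max {rainbow_count V E c {} | c. chromatic_colouring V E c}"

definition fading_minus :: "'a set \<Rightarrow> 'a set set \<Rightarrow> nat" where
  "fading_minus V E = Max {card F | c F. chromatic_colouring V E c \<and> F \<subseteq> V \<and>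
      rainbow_count V E c {} = r_minus V E \<and> rainbow_count V E c F = r_minus V E}"

definition fading_plus :: "'a set \<Rightarrow> 'a set set \<Rightarrow> nat" where
  "fading_plus V E = Max {card F | c F. chromatic_colouring V E c \<and> F \<subseteq> V \<and>
      rainbow_count V E c {} = r_plus V E \<and> rainbow_count V E c F = r_plus V E}"

text \<open>The join G + K_1, where the K_1 has the new vertex w (not in V).\<close>
definition join_K1_V :: "'a set \<Rightarrow> 'a \<Rightarrow> 'a set" where
  "join_K1_V V w = insert w V"

definition join_K1_E :: "'a set \<Rightarrow> 'a set set \<Rightarrow> 'a \<Rightarrow> 'a set set" where
  "join_K1_E V E w = E \<union> {{w, v} | v. v \<in> V}"

end

theory Submission
  imports Defs
begin

text \<open>The apex \<open>w\<close> of \<open>G + K\<^sub>1\<close> is adjacent to every vertex, so in a proper colouring its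
  colour occurs nowhere else. Hence \<open>\<chi>(G + K\<^sub>1) = \<chi>(G) + 1\<close>, and chromatic colourings of
  \<open>G + K\<^sub>1\<close> correspond to chromatic colourings of \<open>G\<close>: delete the colour of \<open>w\<close> and
  renumber, or give \<open>w\<close> the new colour \<open>\<chi>(G) + 1\<close>. Under this correspondence a vertex of
  \<open>G\<close> is rainbow in \<open>G + K\<^sub>1\<close> iff it is rainbow in \<open>G\<close> (the apex supplies its colour),
  while \<open>w\<close> is rainbow iff no colour is faded away completely; this holds whenever some vertex
  of \<open>G\<close> stays rainbow, in particular before fading, as every chromatic colouring has a rainbow
  vertex. Fading \<open>w\<close> destroys all rainbow neighbourhoods. So \<open>r\<^sup>-\<close> and \<open>r\<^sup>+\<close> grow by
  one, and the admissible fade sets of \<open>G + K\<^sub>1\<close> are exactly those of \<open>G\<close>.\<close>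

lemma simple_graph_finite: "simple_graph V E \<Longrightarrow> finite V"
  by (simp add: simple_graph_def)

lemma simple_graph_no_loop: "simple_graph V E \<Longrightarrow> {u} \<notin> E"
  unfolding simple_graph_def by (auto simp: doubleton_eq_iff)

lemma closed_nbhd_subset: "v \<in> V \<Longrightarrow> closed_nbhd V E v \<subseteq> V"
  unfolding closed_nbhd_def by auto

lemma proper_colouring_card:
  assumes "simple_graph V E"
  shows "\<exists>c. proper_colouring V E c (card V)"
proof -
  obtain f where f: "bij_betw f V {0..<card V}"
    using simple_graph_finite[OF assms] ex_bij_betw_finite_nat by blast
  then have "inj_on f V" "\<forall>v\<in>V. f v < card V"
    by (auto simp: bij_betw_def)
  then have "proper_colouring V E (\<lambda>v. Suc (f v)) (card V)"
    using simple_graph_no_loop[OF assms] unfolding proper_colouring_def inj_on_def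
    by (auto simp: Suc_leI)
  then show ?thesis by blast
qed

lemma chromatic_number_le: "proper_colouring V E c m \<Longrightarrow> chromatic_number V E \<le> m"
  unfolding chromatic_number_def by (rule Least_le) blast

lemma chromatic_colouring_exists:
  assumes "proper_colouring V E c m"
  shows "\<exists>c. chromatic_colouring V E c"
  unfolding chromatic_colouring_def chromatic_number_def
  by (rule LeastI_ex) (use assms in blast)

definition delete_colour :: "nat \<Rightarrow> ('a \<Rightarrow> nat) \<Rightarrow> 'a \<Rightarrow> nat" where
  "delete_colour j c v = (if j < c v then c v - 1 else c v)"

lemma proper_colouring_delete_colour:
  assumes "proper_colouring V E c m" "j \<in> {1..m}" "\<forall>v\<in>V. c v \<noteq> j"
  shows "proper_colouring V E (delete_colour j c) (m - 1)"
proof -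
  have "delete_colour j c u \<noteq> delete_colour j c v" if "c u \<noteq> c v" "c u \<noteq> j" "c v \<noteq> j" for u v
    using that unfolding delete_colour_def by auto
  moreover have "delete_colour j c v \<in> {1..m - 1}" if "c v \<in> {1..m}" "c v \<noteq> j" for v
    using that assms(2) unfolding delete_colour_def by auto
  ultimately show ?thesis
    using assms unfolding proper_colouring_def by metis
qed

lemma chromatic_colouring_surj:
  assumes "chromatic_colouring V E c"
  shows "{1..chromatic_number V E} \<subseteq> c ` V"
proof
  fix i assume i: "i \<in> {1..chromatic_number V E}"
  show "i \<in> c ` V"
  proof (rule ccontr)
    assume "i \<notin> c ` V"
    then have "proper_colouring V E (delete_colour i c) (chromatic_number V E - 1)"
      using assms i proper_colouring_delete_colour unfolding chromatic_colouring_def by blast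
    then show False
      using chromatic_number_le i by fastforce
  qed
qed

lemma delete_colour_image_covers:
  assumes "j \<in> {1..Suc k}" "\<forall>u\<in>S. c u \<noteq> j"
  shows "{1..k} \<subseteq> delete_colour j c ` S \<longleftrightarrow> {1..Suc k} - {j} \<subseteq> c ` S"
proof
  assume cover: "{1..k} \<subseteq> delete_colour j c ` S"
  show "{1..Suc k} - {j} \<subseteq> c ` S"
  proof
    fix i assume i: "i \<in> {1..Suc k} - {j}"
    define i' where "i' = (if j < i then i - 1 else i)"
    have "i' \<in> {1..k}"
      using i assms(1) unfolding i'_def by auto
    then obtain u where u: "u \<in> S" "delete_colour j c u = i'"
      using cover by blast
    have "c u \<noteq> j" "i \<noteq> j"
      using assms(2) u(1) i by auto
    with u(2) have "c u = i"
      unfolding delete_colour_def i'_def by (simp split: if_splits)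
    with u(1) show "i \<in> c ` S" by blast
  qed
next
  assume cover: "{1..Suc k} - {j} \<subseteq> c ` S"
  show "{1..k} \<subseteq> delete_colour j c ` S"
  proof
    fix i assume i: "i \<in> {1..k}"
    define i' where "i' = (if j \<le> i then Suc i else i)"
    have "i' \<in> {1..Suc k} - {j}"
      using i unfolding i'_def by auto
    then obtain u where "u \<in> S" "c u = i'"
      using cover by blast
    then have "u \<in> S" "delete_colour j c u = i"
      unfolding delete_colour_def i'_def by auto
    then show "i \<in> delete_colour j c ` S" by blast
  qed
qed

lemma proper_colouring_recolour_top:
  assumes proper: "proper_colouring V E c (Suc k)"
    and m: "\<forall>v\<in>V. c v = Suc k \<longrightarrow> m v \<in> {1..k} \<and> m v \<notin> c ` closed_nbhd V E v"
  shows "proper_colouring V E (\<lambda>v. if c v = Suc k then m v else c v) k"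
  unfolding proper_colouring_def
proof (intro conjI ballI impI)
  fix v assume "v \<in> V"
  then show "(if c v = Suc k then m v else c v) \<in> {1..k}"
    using proper m unfolding proper_colouring_def by (auto simp: le_Suc_eq)
next
  fix u v assume uv: "u \<in> V" "v \<in> V" "{u, v} \<in> E"
  then have "c u \<in> c ` closed_nbhd V E v" "c v \<in> c ` closed_nbhd V E u"
    unfolding closed_nbhd_def by (auto simp: insert_commute)
  moreover have "c u \<noteq> c v"
    using proper uv unfolding proper_colouring_def by blast
  ultimately show "(if c u = Suc k then m u else c u) \<noteq> (if c v = Suc k then m v else c v)"
    using m uv by auto
qed

definition rainbow_vertices :: "'a set \<Rightarrow> 'a set set \<Rightarrow> ('a \<Rightarrow> nat) \<Rightarrow> 'a set \<Rightarrow> 'a set" where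
  "rainbow_vertices V E c F = {v \<in> V. {1..chromatic_number V E} \<subseteq> c ` (closed_nbhd V E v - F)}"

lemma rainbow_count_eq_card: "rainbow_count V E c F = card (rainbow_vertices V E c F)"
proof -
  have "(\<forall>i\<in>A. \<exists>u\<in>S. c u = i) \<longleftrightarrow> A \<subseteq> c ` S" for A S
    by (auto simp: image_iff)
  then show ?thesis
    unfolding rainbow_count_def rainbow_vertices_def by (simp only:)
qed

lemma rainbow_vertices_subset: "rainbow_vertices V E c F \<subseteq> V"
  unfolding rainbow_vertices_def by blast

lemma rainbow_vertices_antimono: "F \<subseteq> G \<Longrightarrow> rainbow_vertices V E c G \<subseteq> rainbow_vertices V E c F"
  unfolding rainbow_vertices_def by blast

lemma rainbow_vertices_cong:
  "\<forall>v\<in>V. c v = d v \<Longrightarrow> rainbow_vertices V E c F = rainbow_vertices V E d F"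
proof -
  assume "\<forall>v\<in>V. c v = d v"
  then have "c ` (closed_nbhd V E v - F) = d ` (closed_nbhd V E v - F)" if "v \<in> V" for v
    using closed_nbhd_subset[OF that] by (intro image_cong) auto
  then show ?thesis
    unfolding rainbow_vertices_def by (intro Collect_cong conj_cong refl) simp
qed

lemma rainbow_vertices_covers:
  assumes "v \<in> rainbow_vertices V E c F"
  shows "{1..chromatic_number V E} \<subseteq> c ` (V - F)"
proof -
  have v: "v \<in> V"
    using assms unfolding rainbow_vertices_def by simp
  have "{1..chromatic_number V E} \<subseteq> c ` (closed_nbhd V E v - F)"
    using assms unfolding rainbow_vertices_def by simp
  also have "\<dots> \<subseteq> c ` (V - F)"
    using closed_nbhd_subset[OF v] by (intro image_mono) blast
  finally show ?thesis .
qed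

lemma rainbow_vertices_faded_colour:
  assumes "j \<in> {1..chromatic_number V E}" "\<forall>u\<in>V - F. c u \<noteq> j"
  shows "rainbow_vertices V E c F = {}"
proof (rule equals0I)
  fix v assume "v \<in> rainbow_vertices V E c F"
  then have "j \<in> c ` (V - F)"
    using assms(1) by (blast dest: rainbow_vertices_covers)
  with assms(2) show False by blast
qed

lemma rainbow_count_antimono:
  "finite V \<Longrightarrow> F \<subseteq> G \<Longrightarrow> rainbow_count V E c G \<le> rainbow_count V E c F"
  unfolding rainbow_count_eq_card
  by (intro card_mono rainbow_vertices_antimono) (auto intro: finite_subset[OF rainbow_vertices_subset])

lemma rainbow_count_le_card: "finite V \<Longrightarrow> rainbow_count V E c F \<le> card V"
  unfolding rainbow_count_eq_card by (intro card_mono rainbow_vertices_subset)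

text \<open>If no vertex were rainbow, every vertex of the top colour class would miss some colour
  in its closed neighbourhood; recolouring it with a missing colour would save a colour.\<close>

lemma rainbow_vertices_nonempty:
  assumes "chromatic_colouring V E c" "V \<noteq> {}"
  shows "rainbow_vertices V E c {} \<noteq> {}"
proof
  assume no_rainbow: "rainbow_vertices V E c {} = {}"
  have proper: "proper_colouring V E c (chromatic_number V E)"
    using assms(1) unfolding chromatic_colouring_def .
  obtain v0 where "v0 \<in> V"
    using assms(2) by blast
  then have "chromatic_number V E \<noteq> 0"
    using proper unfolding proper_colouring_def by fastforce
  then obtain k where k: "chromatic_number V E = Suc k"
    using not0_implies_Suc by blast
  have "\<exists>i. c v = Suc k \<longrightarrow> i \<in> {1..k} \<and> i \<notin> c ` closed_nbhd V E v" if v: "v \<in> V" for v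
  proof -
    have "\<not> {1..Suc k} \<subseteq> c ` closed_nbhd V E v"
      using no_rainbow v k unfolding rainbow_vertices_def by auto
    then obtain i where i: "i \<in> {1..Suc k}" "i \<notin> c ` closed_nbhd V E v"
      by blast
    have "v \<in> closed_nbhd V E v"
      unfolding closed_nbhd_def by simp
    then have "c v = Suc k \<longrightarrow> i \<noteq> Suc k"
      using i(2) by (metis image_eqI)
    with i show ?thesis
      by (auto simp: le_Suc_eq)
  qed
  then obtain m where "\<forall>v\<in>V. c v = Suc k \<longrightarrow> m v \<in> {1..k} \<and> m v \<notin> c ` closed_nbhd V E v"
    by metis
  then have "proper_colouring V E (\<lambda>v. if c v = Suc k then m v else c v) k"
    using proper k by (intro proper_colouring_recolour_top) simp_all
  then show False
    using chromatic_number_le k by fastforce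
qed

definition rainbow_values :: "'a set \<Rightarrow> 'a set set \<Rightarrow> nat set" where
  "rainbow_values V E = {rainbow_count V E c {} | c. chromatic_colouring V E c}"

lemma finite_rainbow_values: "simple_graph V E \<Longrightarrow> finite (rainbow_values V E)"
  unfolding rainbow_values_def
  by (rule finite_subset[of _ "{..card V}"]) (auto simp: rainbow_count_le_card simple_graph_finite)

lemma rainbow_values_nonempty:
  assumes "simple_graph V E"
  shows "rainbow_values V E \<noteq> {}"
proof -
  obtain c where "proper_colouring V E c (card V)"
    using proper_colouring_card[OF assms] ..
  then obtain d where "chromatic_colouring V E d"
    using chromatic_colouring_exists by blast
  then show ?thesis
    unfolding rainbow_values_def by blast
qed

definition fade_set_sizes :: "'a set \<Rightarrow> 'a set set \<Rightarrow> nat \<Rightarrow> nat set" where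
  "fade_set_sizes V E t = {card F | c F. chromatic_colouring V E c \<and> F \<subseteq> V \<and>
     rainbow_count V E c {} = t \<and> rainbow_count V E c F = t}"

locale join_K1 =
  fixes V :: "'a set" and E :: "'a set set" and w :: 'a
  assumes simple: "simple_graph V E" and nonempty: "V \<noteq> {}" and apex_fresh: "w \<notin> V"
begin

abbreviation "V' \<equiv> join_K1_V V w"
abbreviation "E' \<equiv> join_K1_E V E w"

lemma edge_iff: "u \<in> V \<Longrightarrow> v \<in> V \<Longrightarrow> {u, v} \<in> E' \<longleftrightarrow> {u, v} \<in> E"
  unfolding join_K1_E_def using apex_fresh by (auto simp: doubleton_eq_iff)

lemma apex_edge: "v \<in> V \<Longrightarrow> {v, w} \<in> E'"
  unfolding join_K1_E_def by (auto simp: insert_commute)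

lemma no_apex_loop: "{w} \<notin> E'"
  unfolding join_K1_E_def using apex_fresh simple_graph_no_loop[OF simple]
  by (auto simp: doubleton_eq_iff)

lemma closed_nbhd_apex: "closed_nbhd V' E' w = V'"
  unfolding closed_nbhd_def join_K1_V_def using apex_edge by auto

lemma closed_nbhd_join: "v \<in> V \<Longrightarrow> closed_nbhd V' E' v = insert w (closed_nbhd V E v)"
  unfolding closed_nbhd_def join_K1_V_def
  using edge_iff apex_edge[of v] by (auto simp: insert_commute)

lemma proper_colouring_join_iff:
  "proper_colouring V' E' c m \<longleftrightarrow>
     proper_colouring V E c m \<and> c w \<in> {1..m} \<and> (\<forall>v\<in>V. c v \<noteq> c w)"
  unfolding proper_colouring_def join_K1_V_def
  using edge_iff apex_edge no_apex_loop by (auto simp: insert_commute)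

lemma proper_colouring_join_extend:
  assumes "proper_colouring V E c m"
  shows "proper_colouring V' E' (c(w := Suc m)) (Suc m)"
proof -
  have "proper_colouring V E (c(w := Suc m)) (Suc m)"
    using assms apex_fresh unfolding proper_colouring_def by auto
  moreover have "\<forall>v\<in>V. c v \<noteq> Suc m"
    using assms unfolding proper_colouring_def by fastforce
  ultimately show ?thesis
    unfolding proper_colouring_join_iff using apex_fresh by auto
qed

lemma proper_colouring_join_delete:
  assumes "proper_colouring V' E' c m"
  shows "proper_colouring V E (delete_colour (c w) c) (m - 1)"
  using assms proper_colouring_delete_colour unfolding proper_colouring_join_iff by blast

lemma chromatic_number_join: "chromatic_number V' E' = Suc (chromatic_number V E)"
proof (rule antisym)
  obtain c0 where "proper_colouring V E c0 (card V)"
    using proper_colouring_card[OF simple] ..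
  then obtain c where c: "chromatic_colouring V E c"
    using chromatic_colouring_exists by blast
  then have extended: "proper_colouring V' E' (c(w := Suc (chromatic_number V E))) (Suc (chromatic_number V E))"
    unfolding chromatic_colouring_def by (rule proper_colouring_join_extend)
  then show "chromatic_number V' E' \<le> Suc (chromatic_number V E)"
    by (rule chromatic_number_le)
  obtain c' where c': "proper_colouring V' E' c' (chromatic_number V' E')"
    using chromatic_colouring_exists[OF extended] unfolding chromatic_colouring_def by blast
  then have "c' w \<in> {1..chromatic_number V' E'}"
    unfolding proper_colouring_join_iff by blast
  moreover have "chromatic_number V E \<le> chromatic_number V' E' - 1"
    using c' proper_colouring_join_delete chromatic_number_le by blast
  ultimately show "Suc (chromatic_number V E) \<le> chromatic_number V' E'"
    by auto
qed

lemma chromatic_colouring_join_delete: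
  "chromatic_colouring V' E' c \<Longrightarrow> chromatic_colouring V E (delete_colour (c w) c)"
  using proper_colouring_join_delete unfolding chromatic_colouring_def chromatic_number_join
  by fastforce

lemma chromatic_colouring_join_extend:
  "chromatic_colouring V E c \<Longrightarrow> chromatic_colouring V' E' (c(w := Suc (chromatic_number V E)))"
  using proper_colouring_join_extend unfolding chromatic_colouring_def chromatic_number_join .

lemma rainbow_vertex_join_iff:
  assumes c: "chromatic_colouring V' E' c" and "w \<notin> F" and v: "v \<in> V"
  shows "v \<in> rainbow_vertices V' E' c F \<longleftrightarrow> v \<in> rainbow_vertices V E (delete_colour (c w) c) F"
proof -
  let ?k = "chromatic_number V E"
  have cw: "c w \<in> {1..Suc ?k}" and distinct: "\<forall>v\<in>V. c v \<noteq> c w"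
    using c unfolding chromatic_colouring_def chromatic_number_join proper_colouring_join_iff
    by blast+
  have "closed_nbhd V' E' v - F = insert w (closed_nbhd V E v - F)"
    using closed_nbhd_join[OF v] \<open>w \<notin> F\<close> by auto
  then have "v \<in> rainbow_vertices V' E' c F \<longleftrightarrow>
      {1..Suc ?k} - {c w} \<subseteq> c ` (closed_nbhd V E v - F)"
    using v unfolding rainbow_vertices_def chromatic_number_join by (auto simp: join_K1_V_def)
  also have "\<dots> \<longleftrightarrow> {1..?k} \<subseteq> delete_colour (c w) c ` (closed_nbhd V E v - F)"
    using distinct closed_nbhd_subset[OF v]
    by (intro delete_colour_image_covers[OF cw, symmetric]) blast
  finally show ?thesis
    using v unfolding rainbow_vertices_def by simp
qed

lemma apex_rainbow_iff:
  "w \<in> rainbow_vertices V' E' c F \<longleftrightarrow> {1..Suc (chromatic_number V E)} \<subseteq> c ` (V' - F)"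
  using closed_nbhd_apex unfolding rainbow_vertices_def chromatic_number_join
  by (simp add: join_K1_V_def)

lemma rainbow_vertices_join:
  assumes c: "chromatic_colouring V' E' c" and "w \<notin> F"
  shows "rainbow_vertices V' E' c F = rainbow_vertices V E (delete_colour (c w) c) F
           \<union> (if {1..Suc (chromatic_number V E)} \<subseteq> c ` (V' - F) then {w} else {})"
    (is "?R' = ?R \<union> ?apex")
proof (rule set_eqI)
  fix x
  show "x \<in> ?R' \<longleftrightarrow> x \<in> ?R \<union> ?apex"
  proof (cases "x \<in> V")
    case True
    then show ?thesis
      using rainbow_vertex_join_iff[OF assms] apex_fresh by auto
  next
    case False
    then have "x \<notin> ?R" "x \<in> ?R' \<longleftrightarrow> x = w \<and> w \<in> ?R'"
      using rainbow_vertices_subset[of V' E' c F] rainbow_vertices_subset[of V E]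
      by (auto simp: join_K1_V_def)
    then show ?thesis
      using apex_rainbow_iff by auto
  qed
qed

lemma rainbow_count_join:
  assumes "chromatic_colouring V' E' c" "w \<notin> F"
  shows "rainbow_count V' E' c F = rainbow_count V E (delete_colour (c w) c) F
           + (if {1..Suc (chromatic_number V E)} \<subseteq> c ` (V' - F) then 1 else 0)"
proof -
  have "finite (rainbow_vertices V E (delete_colour (c w) c) F)"
    using finite_subset[OF rainbow_vertices_subset simple_graph_finite[OF simple]] .
  moreover have "w \<notin> rainbow_vertices V E (delete_colour (c w) c) F"
    using apex_fresh rainbow_vertices_subset by (metis subsetD)
  ultimately show ?thesis
    unfolding rainbow_count_eq_card rainbow_vertices_join[OF assms] by simp
qed

lemma rainbow_count_join_unfaded:
  assumes "chromatic_colouring V' E' c"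
  shows "rainbow_count V' E' c {} = Suc (rainbow_count V E (delete_colour (c w) c) {})"
  using rainbow_count_join[OF assms] chromatic_colouring_surj[OF assms]
  unfolding chromatic_number_join by simp

lemma rainbow_count_join_apex_faded:
  assumes "chromatic_colouring V' E' c" "w \<in> F"
  shows "rainbow_count V' E' c F = 0"
proof -
  have "c w \<in> {1..chromatic_number V' E'}" "\<forall>u\<in>V' - F. c u \<noteq> c w"
    using assms unfolding chromatic_colouring_def chromatic_number_join proper_colouring_join_iff
    by (auto simp: join_K1_V_def)
  then show ?thesis
    unfolding rainbow_count_eq_card by (simp add: rainbow_vertices_faded_colour)
qed

lemma rainbow_count_join_extend:
  assumes c: "chromatic_colouring V E c" and "F \<subseteq> V" and "rainbow_vertices V E c F \<noteq> {}"
  shows "rainbow_count V' E' (c(w := Suc (chromatic_number V E))) F = Suc (rainbow_count V E c F)"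
proof -
  let ?k = "chromatic_number V E"
  let ?c = "c(w := Suc ?k)"
  have c': "chromatic_colouring V' E' ?c"
    using c by (rule chromatic_colouring_join_extend)
  have w: "w \<notin> F"
    using assms(2) apex_fresh by blast
  have "\<forall>v\<in>V. delete_colour (?c w) ?c v = c v"
    using c apex_fresh unfolding chromatic_colouring_def proper_colouring_def
    by (auto simp: delete_colour_def)
  then have same: "rainbow_count V E (delete_colour (?c w) ?c) F = rainbow_count V E c F"
    unfolding rainbow_count_eq_card by (simp only: rainbow_vertices_cong)
  obtain v where "v \<in> rainbow_vertices V E c F"
    using assms(3) by blast
  then have "{1..?k} \<subseteq> c ` (V - F)"
    by (rule rainbow_vertices_covers)
  also have "\<dots> = ?c ` (V - F)"
    using apex_fresh by (intro image_cong) auto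
  also have "\<dots> \<subseteq> ?c ` (V' - F)"
    by (intro image_mono) (auto simp: join_K1_V_def)
  finally have "insert (Suc ?k) {1..?k} \<subseteq> ?c ` (V' - F)"
    using w by (auto simp: join_K1_V_def)
  then have "{1..Suc ?k} \<subseteq> ?c ` (V' - F)"
    by (simp add: atLeastAtMostSuc_conv)
  then show ?thesis
    using rainbow_count_join[OF c' w] same by simp
qed

lemma rainbow_values_join: "rainbow_values V' E' = Suc ` rainbow_values V E"
proof
  show "rainbow_values V' E' \<subseteq> Suc ` rainbow_values V E"
  proof
    fix x assume "x \<in> rainbow_values V' E'"
    then obtain c where c: "chromatic_colouring V' E' c" and x: "x = rainbow_count V' E' c {}"
      unfolding rainbow_values_def by blast
    then have "x = Suc (rainbow_count V E (delete_colour (c w) c) {})"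
      using rainbow_count_join_unfaded by simp
    then show "x \<in> Suc ` rainbow_values V E"
      unfolding rainbow_values_def using chromatic_colouring_join_delete[OF c] by blast
  qed
  show "Suc ` rainbow_values V E \<subseteq> rainbow_values V' E'"
  proof
    fix x assume "x \<in> Suc ` rainbow_values V E"
    then obtain c where c: "chromatic_colouring V E c" and x: "x = Suc (rainbow_count V E c {})"
      unfolding rainbow_values_def by blast
    have "x = rainbow_count V' E' (c(w := Suc (chromatic_number V E))) {}"
      using rainbow_count_join_extend[OF c _ rainbow_vertices_nonempty[OF c nonempty]] x by simp
    then show "x \<in> rainbow_values V' E'"
      unfolding rainbow_values_def using chromatic_colouring_join_extend[OF c] by blast
  qed
qed

lemma r_minus_join: "r_minus V' E' = Suc (r_minus V E)"
  and r_plus_join: "r_plus V' E' = Suc (r_plus V E)"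
proof -
  have "mono Suc"
    by (rule monoI) simp
  note commute = mono_Min_commute[OF this] mono_Max_commute[OF this]
  show "r_minus V' E' = Suc (r_minus V E)" "r_plus V' E' = Suc (r_plus V E)"
    unfolding r_minus_def r_plus_def rainbow_values_def[symmetric] rainbow_values_join
    using commute finite_rainbow_values[OF simple] rainbow_values_nonempty[OF simple] by simp_all
qed

lemma fade_set_sizes_join_subset: "fade_set_sizes V' E' (Suc t) \<subseteq> fade_set_sizes V E t"
proof
  fix x assume "x \<in> fade_set_sizes V' E' (Suc t)"
  then obtain c F where c: "chromatic_colouring V' E' c" and F: "F \<subseteq> V'"
    and unfaded: "rainbow_count V' E' c {} = Suc t" and faded: "rainbow_count V' E' c F = Suc t"
    and x: "x = card F"
    unfolding fade_set_sizes_def by blast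
  let ?d = "delete_colour (c w) c"
  have w: "w \<notin> F"
    using rainbow_count_join_apex_faded[OF c] faded by force
  then have FV: "F \<subseteq> V"
    using F by (auto simp: join_K1_V_def)
  have d_unfaded: "rainbow_count V E ?d {} = t"
    using rainbow_count_join_unfaded[OF c] unfaded by simp
  have "rainbow_count V E ?d F \<le> rainbow_count V E ?d {}"
    by (rule rainbow_count_antimono[OF simple_graph_finite[OF simple]]) simp
  then have "rainbow_count V E ?d F \<le> t"
    using d_unfaded by simp
  moreover have "Suc t \<le> Suc (rainbow_count V E ?d F)"
    using rainbow_count_join[OF c w] faded by (simp split: if_splits)
  ultimately have "rainbow_count V E ?d F = t"
    by simp
  then show "x \<in> fade_set_sizes V E t"
    unfolding fade_set_sizes_def
    using chromatic_colouring_join_delete[OF c] FV d_unfaded x by blast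
qed

lemma fade_set_sizes_subset_join: "fade_set_sizes V E t \<subseteq> fade_set_sizes V' E' (Suc t)"
proof
  fix x assume "x \<in> fade_set_sizes V E t"
  then obtain c F where c: "chromatic_colouring V E c" and F: "F \<subseteq> V"
    and unfaded: "rainbow_count V E c {} = t" and faded: "rainbow_count V E c F = t"
    and x: "x = card F"
    unfolding fade_set_sizes_def by blast
  let ?c = "c(w := Suc (chromatic_number V E))"
  have "finite (rainbow_vertices V E c {})"
    using finite_subset[OF rainbow_vertices_subset simple_graph_finite[OF simple]] .
  then have "t \<noteq> 0"
    using rainbow_vertices_nonempty[OF c nonempty] unfaded card_0_eq
    unfolding rainbow_count_eq_card by blast
  then have "rainbow_vertices V E c F \<noteq> {}"
    using faded unfolding rainbow_count_eq_card by auto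
  then have "rainbow_count V' E' ?c F = Suc t"
    using rainbow_count_join_extend[OF c F] faded by simp
  moreover have "rainbow_count V' E' ?c {} = Suc t"
    using rainbow_count_join_extend[OF c _ rainbow_vertices_nonempty[OF c nonempty]] unfaded by simp
  moreover have "F \<subseteq> V'"
    using F by (auto simp: join_K1_V_def)
  ultimately show "x \<in> fade_set_sizes V' E' (Suc t)"
    unfolding fade_set_sizes_def using chromatic_colouring_join_extend[OF c] x by blast
qed

lemma fade_set_sizes_join: "fade_set_sizes V' E' (Suc t) = fade_set_sizes V E t"
  using fade_set_sizes_join_subset fade_set_sizes_subset_join by (rule equalityI)

end

theorem lemma2p3:
  fixes V :: "'a set" and E :: "'a set set" and w :: 'a
  assumes "connected_graph V E" and "w \<notin> V"
  shows "fading_minus (join_K1_V V w) (join_K1_E V E w) = fading_minus V E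
       \<and> fading_plus (join_K1_V V w) (join_K1_E V E w) = fading_plus V E"
proof -
  interpret join_K1 V E w
    using assms by unfold_locales (auto simp: connected_graph_def)
  show ?thesis
    unfolding fading_minus_def fading_plus_def fade_set_sizes_def[symmetric]
      r_minus_join r_plus_join fade_set_sizes_join
    by (rule conjI refl)+
qed

end
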